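(* Let $G=(N,A)$ be an arc-compressed $s$-$t$ DAG. Then every arc $uv\in A$ that is an $s$-dominator is the immediate $s$-dominator of at least two of the arcs leaving $v$.
   Context: An $s$-$t$ DAG is a directed acyclic multigraph (parallel arcs allowed) with a unique source $s$ and a unique sink $t$ such that every node is reachable from $s$ and every node reaches $t$. It is arc-compressed if no node has both indegree exactly one and outdegree exactly one (i.e. every maximal path whose internal nodes have indegree and outdegree one consists of a single arc). An arc $ab$ $s$-dominates an arc $xy$ if $ab=xy$ or every $s$-$x$ path contains $ab$; it strictly $s$-dominates $xy$ if moreover $ab\neq xy$. An arc is an $s$-dominator if it strictly $s$-dominates some arc. The immediate $s$-dominator of an arc $xy$ having at least one strict $s$-dominator is the strict $s$-dominator of $xy$ that is $s$-dominated by all strict $s$-dominators of $xy$. *)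

theory Defs
  imports Main
begin

text \<open>A directed multigraph is given by a node set N, an arc set A (arcs are
  abstract objects, so parallel arcs are allowed) and functions tail, head giving
  the tail and head of each arc.\<close>

definition is_path :: "'e set \<Rightarrow> ('e \<Rightarrow> 'v) \<Rightarrow> ('e \<Rightarrow> 'v) \<Rightarrow> 'v \<Rightarrow> 'v \<Rightarrow> 'e list \<Rightarrow> bool" where
  "is_path A tail head x y p \<longleftrightarrow>
     set p \<subseteq> A \<and>
     (\<forall>i. Suc i < length p \<longrightarrow> head (p ! i) = tail (p ! Suc i)) \<and>
     (if p = [] then x = y else tail (p ! 0) = x \<and> head (last p) = y)"

definition indeg :: "'e set \<Rightarrow> ('e \<Rightarrow> 'v) \<Rightarrow> 'v \<Rightarrow> nat" where
  "indeg A head v = card {a \<in> A. head a = v}"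

definition outdeg :: "'e set \<Rightarrow> ('e \<Rightarrow> 'v) \<Rightarrow> 'v \<Rightarrow> nat" where
  "outdeg A tail v = card {a \<in> A. tail a = v}"

definition st_dag :: "'v set \<Rightarrow> 'e set \<Rightarrow> ('e \<Rightarrow> 'v) \<Rightarrow> ('e \<Rightarrow> 'v) \<Rightarrow> 'v \<Rightarrow> 'v \<Rightarrow> bool" where
  "st_dag N A tail head s t \<longleftrightarrow>
     finite N \<and> finite A \<and>
     (\<forall>a\<in>A. tail a \<in> N \<and> head a \<in> N) \<and>
     s \<in> N \<and> t \<in> N \<and>
     \<comment> \<open>acyclic: no nonempty closed walk\<close>
     (\<forall>x p. is_path A tail head x x p \<longrightarrow> p = []) \<and>
     \<comment> \<open>s is the unique source, t the unique sink\<close>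
     (\<forall>v\<in>N. indeg A head v = 0 \<longleftrightarrow> v = s) \<and>
     (\<forall>v\<in>N. outdeg A tail v = 0 \<longleftrightarrow> v = t) \<and>
     \<comment> \<open>every node reachable from s and reaches t\<close>
     (\<forall>v\<in>N. (\<exists>p. is_path A tail head s v p) \<and> (\<exists>p. is_path A tail head v t p))"

definition arc_compressed :: "'v set \<Rightarrow> 'e set \<Rightarrow> ('e \<Rightarrow> 'v) \<Rightarrow> ('e \<Rightarrow> 'v) \<Rightarrow> bool" where
  "arc_compressed N A tail head \<longleftrightarrow>
     (\<forall>v\<in>N. \<not> (indeg A head v = 1 \<and> outdeg A tail v = 1))"

definition s_dom :: "'e set \<Rightarrow> ('e \<Rightarrow> 'v) \<Rightarrow> ('e \<Rightarrow> 'v) \<Rightarrow> 'v \<Rightarrow> 'e \<Rightarrow> 'e \<Rightarrow> bool" where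
  "s_dom A tail head s ab xy \<longleftrightarrow>
     ab = xy \<or> (\<forall>p. is_path A tail head s (tail xy) p \<longrightarrow> ab \<in> set p)"

definition strict_s_dom :: "'e set \<Rightarrow> ('e \<Rightarrow> 'v) \<Rightarrow> ('e \<Rightarrow> 'v) \<Rightarrow> 'v \<Rightarrow> 'e \<Rightarrow> 'e \<Rightarrow> bool" where
  "strict_s_dom A tail head s ab xy \<longleftrightarrow> s_dom A tail head s ab xy \<and> ab \<noteq> xy"

definition is_s_dominator :: "'e set \<Rightarrow> ('e \<Rightarrow> 'v) \<Rightarrow> ('e \<Rightarrow> 'v) \<Rightarrow> 'v \<Rightarrow> 'e \<Rightarrow> bool" where
  "is_s_dominator A tail head s ab \<longleftrightarrow> (\<exists>xy\<in>A. strict_s_dom A tail head s ab xy)"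

definition immediate_s_dom :: "'e set \<Rightarrow> ('e \<Rightarrow> 'v) \<Rightarrow> ('e \<Rightarrow> 'v) \<Rightarrow> 'v \<Rightarrow> 'e \<Rightarrow> 'e \<Rightarrow> bool" where
  "immediate_s_dom A tail head s ab xy \<longleftrightarrow>
     ab \<in> A \<and> strict_s_dom A tail head s ab xy \<and>
     (\<forall>c\<in>A. strict_s_dom A tail head s c xy \<longrightarrow> s_dom A tail head s c ab)"

end

theory Submission
  imports Defs
begin

text \<open>If the arc uv strictly s-dominates some arc xy, then uv lies on every s-v path:
  an s-v path avoiding uv could be continued to x, so uv would have to occur after v,
  closing a cycle. Consequently uv is the only arc entering v, and
  since every s-u path extended by uv is an s-v path, every strict s-dominator of an
  arc leaving v also s-dominates uv; thus uv is the immediate s-dominator of all arcs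
  leaving v. Arc-compression at v (indegree one) then forces at least two such arcs.\<close>

lemma path_Nil [simp]: "is_path A tail head x y [] \<longleftrightarrow> x = y"
  by (simp add: is_path_def)

lemma all_Suc_less_length_Cons:
  "(\<forall>i. Suc i < length (a # p) \<longrightarrow> Q i) \<longleftrightarrow>
   (p \<noteq> [] \<longrightarrow> Q 0) \<and> (\<forall>i. Suc i < length p \<longrightarrow> Q (Suc i))"
  by (cases p) (auto simp: less_Suc_eq_0_disj)

lemma path_Cons [simp]:
  "is_path A tail head x y (a # p) \<longleftrightarrow> a \<in> A \<and> tail a = x \<and> is_path A tail head (head a) y p"
  unfolding is_path_def all_Suc_less_length_Cons by auto

lemma path_append:
  "is_path A tail head x z (p @ q) \<longleftrightarrow> (\<exists>y. is_path A tail head x y p \<and> is_path A tail head y z q)"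
  by (induction p arbitrary: x) auto

lemma path_snoc [simp]:
  "is_path A tail head x z (p @ [a]) \<longleftrightarrow> is_path A tail head x (tail a) p \<and> a \<in> A \<and> head a = z"
  by (auto simp: path_append)

lemma path_prefix_to_arc:
  assumes "is_path A tail head x y p" "a \<in> set p"
  shows "\<exists>q. is_path A tail head x (tail a) q"
proof -
  obtain p1 p2 where "p = p1 @ a # p2" using split_list assms(2) by fast
  then show ?thesis using assms(1) by (auto simp: path_append)
qed

lemma path_suffix_from_arc:
  assumes "is_path A tail head x y p" "a \<in> set p"
  shows "\<exists>q. is_path A tail head (head a) y q"
proof -
  obtain p1 p2 where "p = p1 @ a # p2" using split_list assms(2) by fast
  then show ?thesis using assms(1) by (auto simp: path_append)
qed

definition cycle_free :: "'e set \<Rightarrow> ('e \<Rightarrow> 'v) \<Rightarrow> ('e \<Rightarrow> 'v) \<Rightarrow> bool" where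
  "cycle_free A tail head \<longleftrightarrow> (\<forall>x p. is_path A tail head x x p \<longrightarrow> p = [])"

lemma st_dag_cycle_free: "st_dag N A tail head s t \<Longrightarrow> cycle_free A tail head"
  by (simp add: st_dag_def cycle_free_def)

lemma st_dag_reachable_tail:
  "st_dag N A tail head s t \<Longrightarrow> a \<in> A \<Longrightarrow> \<exists>p. is_path A tail head s (tail a) p"
  by (simp add: st_dag_def)

lemma no_path_head_to_tail:
  assumes "cycle_free A tail head"
    and "a \<in> A" "is_path A tail head (head a) (tail a) p"
  shows False
proof -
  have "is_path A tail head (head a) (head a) (p @ [a])" using assms(2,3) by simp
  then show False using assms(1) unfolding cycle_free_def by blast
qed

lemma strict_s_dom_reaches_tail:
  assumes "strict_s_dom A tail head s uv xy" "is_path A tail head s (tail xy) Q"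
  obtains R where "is_path A tail head (head uv) (tail xy) R"
proof -
  have "uv \<in> set Q" using assms unfolding strict_s_dom_def s_dom_def by blast
  then show ?thesis using path_suffix_from_arc[OF assms(2)] that by blast
qed

lemma strict_s_dom_dominates_own_head:
  assumes "cycle_free A tail head"
    and "uv \<in> A" "strict_s_dom A tail head s uv xy" "is_path A tail head s (tail xy) Q"
    and P: "is_path A tail head s (head uv) P"
  shows "uv \<in> set P"
proof (rule ccontr)
  assume uv_notin: "uv \<notin> set P"
  obtain R where R: "is_path A tail head (head uv) (tail xy) R"
    using strict_s_dom_reaches_tail assms(3,4) .
  have "is_path A tail head s (tail xy) (P @ R)"
    unfolding path_append using P R by blast
  then have "uv \<in> set (P @ R)"
    using assms(3) unfolding strict_s_dom_def s_dom_def by blast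
  then have "uv \<in> set R" using uv_notin by simp
  then obtain R1 where "is_path A tail head (head uv) (tail uv) R1"
    using path_prefix_to_arc[OF R] by auto
  then show False by (rule no_path_head_to_tail[OF assms(1,2)])
qed

lemma arc_dominating_own_head_is_only_in_arc:
  assumes "cycle_free A tail head"
    and reachable: "\<And>a. a \<in> A \<Longrightarrow> \<exists>p. is_path A tail head s (tail a) p"
    and "uv \<in> A"
    and dom: "\<And>P. is_path A tail head s (head uv) P \<Longrightarrow> uv \<in> set P"
  shows "{a \<in> A. head a = head uv} = {uv}"
proof (intro equalityI subsetI)
  fix a assume a: "a \<in> {a \<in> A. head a = head uv}"
  obtain R where R: "is_path A tail head s (tail a) R" using reachable a by blast
  show "a \<in> {uv}"
  proof (rule ccontr)
    assume "a \<notin> {uv}"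
    moreover have "uv \<in> set (R @ [a])" using dom[of "R @ [a]"] R a by simp
    ultimately have "uv \<in> set R" by simp
    then obtain R2 where "is_path A tail head (head uv) (tail a) R2"
      using path_suffix_from_arc[OF R] by auto
    then show False using no_path_head_to_tail[OF assms(1), of a] a by simp
  qed
qed (use \<open>uv \<in> A\<close> in simp)

lemma immediate_s_dom_of_out_arc:
  assumes "cycle_free A tail head"
    and "uv \<in> A"
    and dom: "\<And>P. is_path A tail head s (head uv) P \<Longrightarrow> uv \<in> set P"
    and e: "tail e = head uv"
  shows "immediate_s_dom A tail head s uv e"
proof -
  have "e \<noteq> uv"
    using no_path_head_to_tail[OF assms(1,2), where p = "[]"] e by auto
  moreover have "s_dom A tail head s uv e"
    using dom e unfolding s_dom_def by simp
  moreover have "s_dom A tail head s c uv" if c: "strict_s_dom A tail head s c e" for c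
  proof -
    have "c \<in> set P" if "c \<noteq> uv" "is_path A tail head s (tail uv) P" for P
    proof -
      have "is_path A tail head s (tail e) (P @ [uv])" using that(2) e \<open>uv \<in> A\<close> by simp
      then have "c \<in> set (P @ [uv])" using c unfolding strict_s_dom_def s_dom_def by blast
      then show ?thesis using that(1) by simp
    qed
    then show ?thesis unfolding s_dom_def by blast
  qed
  ultimately show ?thesis
    unfolding immediate_s_dom_def strict_s_dom_def using \<open>uv \<in> A\<close> by blast
qed

lemma arc_compressed_two_out_arcs:
  assumes "arc_compressed N A tail head" "finite A" "v \<in> N"
    and "indeg A head v = 1" "e \<in> A" "tail e = v"
  obtains e1 e2 where "e1 \<in> A" "e2 \<in> A" "e1 \<noteq> e2" "tail e1 = v" "tail e2 = v"
proof -
  let ?S = "{a \<in> A. tail a = v}"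
  have "card ?S \<noteq> 1"
    using assms(1,3,4) unfolding arc_compressed_def outdeg_def by blast
  moreover have "card ?S \<noteq> 0"
    using assms(2,5,6) by auto
  ultimately have "\<not> card ?S \<le> Suc 0" by linarith
  then show ?thesis
    using that card_le_Suc0_iff_eq[of ?S] \<open>finite A\<close> by auto
qed

theorem lemma6:
  assumes "st_dag N A tail head s t"
    and "arc_compressed N A tail head"
    and "uv \<in> A"
    and "is_s_dominator A tail head s uv"
  shows "\<exists>e1\<in>A. \<exists>e2\<in>A. e1 \<noteq> e2 \<and> tail e1 = head uv \<and> tail e2 = head uv \<and>
           immediate_s_dom A tail head s uv e1 \<and> immediate_s_dom A tail head s uv e2"
proof -
  have cycle_free: "cycle_free A tail head" using st_dag_cycle_free assms(1) .
  have reachable: "\<And>a. a \<in> A \<Longrightarrow> \<exists>p. is_path A tail head s (tail a) p"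
    by (rule st_dag_reachable_tail[OF assms(1)])
  obtain xy where xy: "xy \<in> A" "strict_s_dom A tail head s uv xy"
    using assms(4) unfolding is_s_dominator_def by blast
  obtain Q where Q: "is_path A tail head s (tail xy) Q" using reachable xy(1) by blast
  have dom: "\<And>P. is_path A tail head s (head uv) P \<Longrightarrow> uv \<in> set P"
    using strict_s_dom_dominates_own_head[OF cycle_free assms(3) xy(2) Q] .
  have "indeg A head (head uv) = 1"
    using arc_dominating_own_head_is_only_in_arc[OF cycle_free reachable assms(3) dom]
    unfolding indeg_def by simp
  moreover obtain R where "is_path A tail head (head uv) (tail xy) R"
    using strict_s_dom_reaches_tail xy(2) Q .
  then obtain e where "e \<in> A" "tail e = head uv"
    using xy(1) by (cases R) auto
  moreover have "finite A" "head uv \<in> N"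
    using assms(1,3) unfolding st_dag_def by auto
  ultimately obtain e1 e2 where "e1 \<in> A" "e2 \<in> A" "e1 \<noteq> e2"
    "tail e1 = head uv" "tail e2 = head uv"
    using arc_compressed_two_out_arcs[OF assms(2)] by blast
  then show ?thesis
    using immediate_s_dom_of_out_arc[OF cycle_free assms(3) dom] by blast
qed

end
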